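(* Let $G$ be a split graph with vertex set partitioned as $I^*\cup K$, where $K$ is a clique and $I^*$ is an independent set with $|I^*|=\alpha(G)$, and let $H$ be a graph. Then $\gamma_{gr}(G\circ H)= |I^*|\gamma_{gr}(H)+n(G)$.
   Context: $\alpha(G)$ is the independence number and $N(v)$ the open neighborhood. $n(G)=1$ if there exist $v,w\in K$ with $N(v)\cap N(w)\cap I^*=\emptyset$, and $n(G)=0$ otherwise. The lexicographic product $G\circ H$ has vertex set $V(G)\times V(H)$, with $(g_1,h_1)$ adjacent to $(g_2,h_2)$ iff $g_1g_2\in E(G)$, or $g_1=g_2$ and $h_1h_2\in E(H)$. $\gamma_{gr}$ is the Grundy domination number: the maximum length of a sequence $(v_1,\dots,v_k)$ of distinct vertices whose set is dominating and such that each $N[v_i]\setminus\bigcup_{j<i}N[v_j]$ is non-empty ($N[\cdot]$ the closed neighborhood). *)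

theory Defs
  imports Main
begin

definition fin_graph :: "'a set \<Rightarrow> ('a \<Rightarrow> 'a \<Rightarrow> bool) \<Rightarrow> bool" where
  "fin_graph V E \<longleftrightarrow> finite V \<and> (\<forall>x y. E x y \<longrightarrow> x \<in> V \<and> y \<in> V)
     \<and> (\<forall>x y. E x y \<longrightarrow> E y x) \<and> (\<forall>x. \<not> E x x)"

definition open_nbhd :: "'a set \<Rightarrow> ('a \<Rightarrow> 'a \<Rightarrow> bool) \<Rightarrow> 'a \<Rightarrow> 'a set" where
  "open_nbhd V E v = {u \<in> V. E v u}"

definition closed_nbhd :: "'a set \<Rightarrow> ('a \<Rightarrow> 'a \<Rightarrow> bool) \<Rightarrow> 'a \<Rightarrow> 'a set" where
  "closed_nbhd V E v = insert v (open_nbhd V E v)"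

definition indep_set :: "'a set \<Rightarrow> ('a \<Rightarrow> 'a \<Rightarrow> bool) \<Rightarrow> 'a set \<Rightarrow> bool" where
  "indep_set V E S \<longleftrightarrow> S \<subseteq> V \<and> (\<forall>x\<in>S. \<forall>y\<in>S. \<not> E x y)"

definition clique :: "'a set \<Rightarrow> ('a \<Rightarrow> 'a \<Rightarrow> bool) \<Rightarrow> 'a set \<Rightarrow> bool" where
  "clique V E S \<longleftrightarrow> S \<subseteq> V \<and> (\<forall>x\<in>S. \<forall>y\<in>S. x \<noteq> y \<longrightarrow> E x y)"

definition alpha :: "'a set \<Rightarrow> ('a \<Rightarrow> 'a \<Rightarrow> bool) \<Rightarrow> nat" where
  "alpha V E = Max {card S | S. indep_set V E S}"

definition grundy_dom_seq :: "'a set \<Rightarrow> ('a \<Rightarrow> 'a \<Rightarrow> bool) \<Rightarrow> 'a list \<Rightarrow> bool" where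
  "grundy_dom_seq V E vs \<longleftrightarrow> distinct vs \<and> set vs \<subseteq> V
     \<and> (\<Union>v\<in>set vs. closed_nbhd V E v) = V
     \<and> (\<forall>i < length vs. closed_nbhd V E (vs ! i)
            - (\<Union>j<i. closed_nbhd V E (vs ! j)) \<noteq> {})"

definition grundy_dom_num :: "'a set \<Rightarrow> ('a \<Rightarrow> 'a \<Rightarrow> bool) \<Rightarrow> nat" where
  "grundy_dom_num V E = Max {length vs | vs. grundy_dom_seq V E vs}"

definition lex_vertices :: "'a set \<Rightarrow> 'b set \<Rightarrow> ('a \<times> 'b) set" where
  "lex_vertices VG VH = VG \<times> VH"

definition lex_edges :: "('a \<Rightarrow> 'a \<Rightarrow> bool) \<Rightarrow> 'b set \<Rightarrow> ('b \<Rightarrow> 'b \<Rightarrow> bool)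
    \<Rightarrow> ('a \<times> 'b) \<Rightarrow> ('a \<times> 'b) \<Rightarrow> bool" where
  "lex_edges EG VH EH p q \<longleftrightarrow> snd p \<in> VH \<and> snd q \<in> VH \<and>
     (EG (fst p) (fst q) \<or> (fst p = fst q \<and> EH (snd p) (snd q)))"

definition split_n :: "'a set \<Rightarrow> ('a \<Rightarrow> 'a \<Rightarrow> bool) \<Rightarrow> 'a set \<Rightarrow> 'a set \<Rightarrow> nat" where
  "split_n V E I K = (if \<exists>v\<in>K. \<exists>w\<in>K. open_nbhd V E v \<inter> open_nbhd V E w \<inter> I = {}
                      then 1 else 0)"

end

theory Submission
  imports Defs
begin

text \<open>
  Call a sequence legal if each vertex footprints a vertex not dominated by its predecessors;
  every legal sequence extends to a Grundy dominating one. The vertices of a legal sequence of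
  \<open>G \<circ> H\<close> lying in one fiber \<open>{g} \<times> V(H)\<close> project to a legal sequence of \<open>H\<close>, so each
  fiber carries at most \<open>\<gamma>\<^sub>g\<^sub>r(H)\<close> of them.

  Lower bound: Grundy sequences of \<open>H\<close>, laid out fiber by fiber over the independent set
  \<open>I\<^sup>*\<close>, are legal in \<open>G \<circ> H\<close>. If \<open>v, w \<in> K\<close> have no common neighbour in \<open>I\<^sup>*\<close>, one
  more vertex \<open>(v, h)\<close>, footprinting \<open>(w, h)\<close>, fits in before the fibers over
  \<open>N(w) \<inter> I\<^sup>*\<close>.

  Upper bound: the steps over the clique \<open>K\<close> are paid for by the deficits
  \<open>\<gamma>\<^sub>g\<^sub>r(H) - |fiber over i|\<close>, \<open>i \<in> I\<^sup>*\<close>. Maximality of \<open>I\<^sup>*\<close> makes every clique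
  vertex adjacent to \<open>I\<^sup>*\<close>, so the first clique step \<open>y\<close>, over \<open>k\<^sub>1\<close>, dominates every
  fiber over \<open>N(k\<^sub>1)\<close>. A later clique step whose footprint lies over some \<open>i \<in> I\<^sup>*\<close> is
  charged to \<open>i\<close>: it dominates the whole fiber over \<open>i\<close>, so \<open>i\<close> is charged only once and
  has positive deficit. Every other later clique step footprints over \<open>k\<^sub>1\<close>. These, together with \<open>y\<close>, are paid for by the deficit of a
  single neighbour of \<open>k\<^sub>1\<close> in \<open>I\<^sup>*\<close>, or, failing that, by \<open>n(G) = 1\<close>; which case
  occurs depends on the first step adjacent to \<open>k\<^sub>1\<close>.
\<close>

definition legal_seq :: "'a set \<Rightarrow> ('a \<Rightarrow> 'a \<Rightarrow> bool) \<Rightarrow> 'a list \<Rightarrow> bool" where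
  "legal_seq V E vs \<longleftrightarrow> distinct vs \<and> set vs \<subseteq> V
     \<and> (\<forall>i < length vs. closed_nbhd V E (vs ! i) - (\<Union>j<i. closed_nbhd V E (vs ! j)) \<noteq> {})"

lemma grundy_dom_seq_iff_legal_seq:
  "grundy_dom_seq V E vs \<longleftrightarrow> legal_seq V E vs \<and> (\<Union>v\<in>set vs. closed_nbhd V E v) = V"
  unfolding grundy_dom_seq_def legal_seq_def by blast

lemma self_in_closed_nbhd: "v \<in> closed_nbhd V E v"
  by (simp add: closed_nbhd_def)

lemma closed_nbhd_subset: "v \<in> V \<Longrightarrow> closed_nbhd V E v \<subseteq> V"
  by (auto simp: closed_nbhd_def open_nbhd_def)

lemma legal_seq_Nil: "legal_seq V E []"
  by (simp add: legal_seq_def)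

lemma legal_seq_snoc_iff:
  "legal_seq V E (xs @ [v]) \<longleftrightarrow> legal_seq V E xs \<and> v \<in> V \<and> v \<notin> set xs \<and>
     closed_nbhd V E v - (\<Union>u\<in>set xs. closed_nbhd V E u) \<noteq> {}"
proof -
  have prefix: "(\<Union>j<i. closed_nbhd V E ((xs @ [v]) ! j)) = (\<Union>j<i. closed_nbhd V E (xs ! j))"
    if "i \<le> length xs" for i
    using that by (intro SUP_cong) (auto simp: nth_append)
  have "(\<Union>j<length xs. closed_nbhd V E (xs ! j)) = (\<Union>u\<in>set xs. closed_nbhd V E u)"
    by (auto simp: set_conv_nth)
  then show ?thesis
    unfolding legal_seq_def using prefix by (auto simp: All_less_Suc nth_append)
qed

lemma legal_seq_singleton: "v \<in> V \<Longrightarrow> legal_seq V E [v]"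
  using legal_seq_snoc_iff[of V E "[]" v] self_in_closed_nbhd[of v V E] by (simp add: legal_seq_Nil) blast

lemma legal_seq_extends_to_grundy_dom_seq:
  assumes fin: "finite V" and "legal_seq V E xs"
  shows "\<exists>ys. grundy_dom_seq V E (xs @ ys)"
  using assms(2)
proof (induction "card (V - (\<Union>u\<in>set xs. closed_nbhd V E u))" arbitrary: xs rule: less_induct)
  case less
  let ?D = "\<lambda>xs. \<Union>u\<in>set xs. closed_nbhd V E u"
  show ?case
  proof (cases "?D xs = V")
    case True
    then have "grundy_dom_seq V E (xs @ [])"
      using less.prems by (simp add: grundy_dom_seq_iff_legal_seq)
    then show ?thesis by blast
  next
    case False
    have "?D xs \<subseteq> V"
      using less.prems closed_nbhd_subset[of _ V E] unfolding legal_seq_def by blast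
    then obtain v where v: "v \<in> V" "v \<notin> ?D xs"
      using False by blast
    then have "legal_seq V E (xs @ [v])"
      using less.prems v self_in_closed_nbhd[of v V E] by (auto simp: legal_seq_snoc_iff)
    moreover have "card (V - ?D (xs @ [v])) < card (V - ?D xs)"
      using v fin self_in_closed_nbhd[of v V E] by (intro psubset_card_mono) auto
    ultimately obtain ys where "grundy_dom_seq V E ((xs @ [v]) @ ys)"
      using less.hyps by blast
    then show ?thesis by (intro exI[of _ "v # ys"]) simp
  qed
qed

lemma finite_grundy_dom_seq_lengths:
  assumes "finite V"
  shows "finite {length vs | vs. grundy_dom_seq V E vs}"
proof (rule finite_subset)
  show "{length vs | vs. grundy_dom_seq V E vs} \<subseteq> {..card V}"
  proof
    fix n assume "n \<in> {length vs | vs. grundy_dom_seq V E vs}"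
    then obtain vs where "n = length vs" "distinct vs" "set vs \<subseteq> V"
      by (auto simp: grundy_dom_seq_def)
    then show "n \<in> {..card V}"
      using assms by (metis atMost_iff card_mono distinct_card)
  qed
qed simp

lemma grundy_dom_num_attained:
  assumes "finite V"
  shows "\<exists>vs. grundy_dom_seq V E vs \<and> length vs = grundy_dom_num V E"
proof -
  have "{length vs | vs. grundy_dom_seq V E vs} \<noteq> {}"
    using legal_seq_extends_to_grundy_dom_seq[OF assms legal_seq_Nil] by auto
  then show ?thesis
    using Max_in[OF finite_grundy_dom_seq_lengths[OF assms, of E]]
    unfolding grundy_dom_num_def by auto
qed

lemma legal_seq_length_le_grundy_dom_num:
  assumes "finite V" and "legal_seq V E xs"
  shows "length xs \<le> grundy_dom_num V E"
proof -
  obtain ys where "grundy_dom_seq V E (xs @ ys)"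
    using legal_seq_extends_to_grundy_dom_seq assms by blast
  then have "length (xs @ ys) \<le> grundy_dom_num V E"
    unfolding grundy_dom_num_def
    by (intro Max_ge[OF finite_grundy_dom_seq_lengths[OF assms(1)]]) blast
  then show ?thesis by simp
qed

lemma legal_seq_map_sorted_list_of_set:
  fixes J :: "'i::linorder set"
  assumes "finite J" and "inj_on f J" and "f ` J \<subseteq> V"
    and footprints: "\<forall>j\<in>J. \<exists>w\<in>closed_nbhd V E (f j). \<forall>j'\<in>J. j' < j \<longrightarrow> w \<notin> closed_nbhd V E (f j')"
  shows "legal_seq V E (map f (sorted_list_of_set J))"
proof -
  let ?js = "sorted_list_of_set J"
  have js: "set ?js = J" "sorted_wrt (<) ?js"
    using assms(1) by (auto simp: strict_sorted_list_of_set)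
  have "closed_nbhd V E (f (?js ! i)) - (\<Union>j<i. closed_nbhd V E (f (?js ! j))) \<noteq> {}"
    if i: "i < length ?js" for i
  proof -
    have "?js ! i \<in> J"
      using i js(1) by (metis nth_mem)
    then obtain w where "w \<in> closed_nbhd V E (f (?js ! i))"
      and "\<forall>j'\<in>J. j' < ?js ! i \<longrightarrow> w \<notin> closed_nbhd V E (f j')"
      using footprints by blast
    moreover have "?js ! j < ?js ! i" if "j < i" for j
      using js(2) that i by (simp add: sorted_wrt_nth_less)
    moreover have "?js ! j \<in> J" if "j < i" for j
      using that i js(1) by (metis nth_mem order.strict_trans)
    ultimately show ?thesis by blast
  qed
  then show ?thesis
    using assms(2,3) js(1) by (auto simp: legal_seq_def distinct_map)
qed

lemma card_le_grundy_dom_num_if_footprints: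
  fixes J :: "'i::linorder set"
  assumes "finite V" "finite J" "inj_on f J" "f ` J \<subseteq> V"
    and "\<forall>j\<in>J. \<exists>w\<in>closed_nbhd V E (f j). \<forall>j'\<in>J. j' < j \<longrightarrow> w \<notin> closed_nbhd V E (f j')"
  shows "card J \<le> grundy_dom_num V E"
  using legal_seq_length_le_grundy_dom_num[OF assms(1) legal_seq_map_sorted_list_of_set[OF assms(2-)]]
    assms(2) by simp

lemma card_less_grundy_dom_num_if_footprints:
  fixes J :: "'i::linorder set"
  assumes "finite V" "finite J" "inj_on f J" "f ` J \<subseteq> V"
    and "\<forall>j\<in>J. \<exists>w\<in>closed_nbhd V E (f j). \<forall>j'\<in>J. j' < j \<longrightarrow> w \<notin> closed_nbhd V E (f j')"
    and "w\<^sub>0 \<in> V" "\<forall>j\<in>J. w\<^sub>0 \<notin> closed_nbhd V E (f j)"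
  shows "card J < grundy_dom_num V E"
proof -
  let ?xs = "map f (sorted_list_of_set J)"
  have "legal_seq V E (?xs @ [w\<^sub>0])"
    using legal_seq_map_sorted_list_of_set[OF assms(2-5)] assms(2,6,7) self_in_closed_nbhd[of w\<^sub>0 V E]
    by (auto simp: legal_seq_snoc_iff)
  from legal_seq_length_le_grundy_dom_num[OF assms(1) this] assms(2) show ?thesis by simp
qed

lemma closed_nbhd_lex:
  assumes "fin_graph VG EG" "g \<in> VG" "h \<in> VH"
  shows "u \<in> closed_nbhd (lex_vertices VG VH) (lex_edges EG VH EH) (g, h) \<longleftrightarrow>
     u \<in> VG \<times> VH \<and> (EG g (fst u) \<or> fst u = g \<and> snd u \<in> closed_nbhd VH EH h)"
  using assms
  by (cases u) (auto simp: closed_nbhd_def open_nbhd_def lex_vertices_def lex_edges_def fin_graph_def)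

lemma maximum_indep_set_dominates:
  assumes "fin_graph V E" and "indep_set V E I" and "card I = alpha V E"
    and "k \<in> V" "k \<notin> I"
  shows "\<exists>i\<in>I. E k i"
proof (rule ccontr)
  assume "\<not> (\<exists>i\<in>I. E k i)"
  with assms have "indep_set V E (insert k I)"
    by (auto simp: indep_set_def fin_graph_def)
  moreover have "finite {card S | S. indep_set V E S}"
    using assms(1) by (auto simp: fin_graph_def indep_set_def intro: finite_subset[of _ "card ` Pow V"])
  ultimately have "card (insert k I) \<le> alpha V E"
    unfolding alpha_def by (auto intro: Max_ge)
  moreover have "finite I"
    using assms(1,2) by (auto simp: fin_graph_def indep_set_def intro: finite_subset)
  ultimately show False
    using assms(3,5) by simp
qed

lemma legal_seq_lex_append_fiber:
  assumes G: "fin_graph VG EG" and hs: "legal_seq VH EH hs"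
    and xs: "legal_seq (lex_vertices VG VH) (lex_edges EG VH EH) xs" and i: "i \<in> VG"
    and fresh: "\<forall>x\<in>set xs. fst x \<noteq> i \<and> \<not> EG (fst x) i"
  shows "legal_seq (lex_vertices VG VH) (lex_edges EG VH EH) (xs @ map (Pair i) hs)"
  using hs
proof (induction hs rule: rev_induct)
  case Nil
  then show ?case using xs by simp
next
  case (snoc h hs)
  let ?N = "closed_nbhd (lex_vertices VG VH) (lex_edges EG VH EH)"
  obtain w where hs: "legal_seq VH EH hs" and h: "h \<in> VH" "h \<notin> set hs"
    and w: "w \<in> closed_nbhd VH EH h" "\<forall>u\<in>set hs. w \<notin> closed_nbhd VH EH u"
    using snoc.prems by (auto simp: legal_seq_snoc_iff)
  have "w \<in> VH"
    using closed_nbhd_subset[OF h(1)] w(1) by blast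
  then have "(i, w) \<in> ?N (i, h)"
    using closed_nbhd_lex[OF G i h(1)] i w(1) by simp
  moreover have "(i, w) \<notin> ?N u" if u: "u \<in> set (xs @ map (Pair i) hs)" for u
  proof
    assume iw: "(i, w) \<in> ?N u"
    have "set xs \<subseteq> VG \<times> VH" "set hs \<subseteq> VH"
      using xs hs by (auto simp: legal_seq_def lex_vertices_def)
    then have "fst u \<in> VG" "snd u \<in> VH"
      using u i by auto
    then have "EG (fst u) i \<or> i = fst u \<and> w \<in> closed_nbhd VH EH (snd u)"
      using iw closed_nbhd_lex[OF G, of "fst u" "snd u" VH "(i, w)" EH] by simp
    moreover have "\<not> EG i i"
      using G by (simp add: fin_graph_def)
    ultimately show False
      using u fresh w(2) by (cases u) auto
  qed
  ultimately have "legal_seq (lex_vertices VG VH) (lex_edges EG VH EH)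
      ((xs @ map (Pair i) hs) @ [(i, h)])"
    unfolding legal_seq_snoc_iff using snoc.IH[OF hs] fresh h i by (auto simp: lex_vertices_def)
  then show ?case by simp
qed

lemma legal_seq_lex_append_product:
  assumes G: "fin_graph VG EG" and hs: "legal_seq VH EH hs"
    and "legal_seq (lex_vertices VG VH) (lex_edges EG VH EH) xs"
    and "indep_set VG EG (set is)" and "distinct is"
    and "\<forall>i\<in>set is. \<forall>x\<in>set xs. fst x \<noteq> i \<and> \<not> EG (fst x) i"
  shows "legal_seq (lex_vertices VG VH) (lex_edges EG VH EH) (xs @ List.product is hs)"
  using assms(3-)
proof (induction "is" arbitrary: xs)
  case Nil
  then show ?case by simp
next
  case (Cons i "is")
  have "legal_seq (lex_vertices VG VH) (lex_edges EG VH EH) (xs @ map (Pair i) hs)"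
    using Cons.prems by (intro legal_seq_lex_append_fiber[OF G hs]) (auto simp: indep_set_def)
  moreover have "indep_set VG EG (set is)"
    using Cons.prems(2) by (auto simp: indep_set_def)
  moreover have "\<forall>i'\<in>set is. \<forall>x\<in>set (xs @ map (Pair i) hs). fst x \<noteq> i' \<and> \<not> EG (fst x) i'"
    using Cons.prems by (auto simp: indep_set_def)
  ultimately show ?case
    using Cons.IH[of "xs @ map (Pair i) hs"] Cons.prems(3) by simp
qed

lemma finite_lex_vertices:
  "fin_graph VG EG \<Longrightarrow> fin_graph VH EH \<Longrightarrow> finite (lex_vertices VG VH)"
  by (simp add: fin_graph_def lex_vertices_def)

lemma grundy_dom_num_lex_ge_indep:
  assumes G: "fin_graph VG EG" and H: "fin_graph VH EH" and I: "indep_set VG EG I"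
  shows "card I * grundy_dom_num VH EH \<le> grundy_dom_num (lex_vertices VG VH) (lex_edges EG VH EH)"
proof -
  obtain hs where hs: "legal_seq VH EH hs" "length hs = grundy_dom_num VH EH"
    using grundy_dom_num_attained[of VH EH] H
    by (auto simp: fin_graph_def grundy_dom_seq_iff_legal_seq)
  have "finite I"
    using G I by (auto simp: fin_graph_def indep_set_def intro: finite_subset)
  then obtain "is" where "is": "set is = I" "distinct is"
    using finite_distinct_list by blast
  have "legal_seq (lex_vertices VG VH) (lex_edges EG VH EH) ([] @ List.product is hs)"
    using "is" I by (intro legal_seq_lex_append_product[OF G hs(1) legal_seq_Nil]) auto
  from legal_seq_length_le_grundy_dom_num[OF finite_lex_vertices[OF G H] this]
  show ?thesis
    using "is" hs(2) distinct_card[OF "is"(2)] by simp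
qed

lemma grundy_dom_num_lex_gt_indep:
  assumes G: "fin_graph VG EG" and H: "fin_graph VH EH" "VH \<noteq> {}" and I: "indep_set VG EG I"
    and vw: "v \<in> VG - I" "w \<in> VG - I" "EG v w"
    and no_common: "open_nbhd VG EG v \<inter> open_nbhd VG EG w \<inter> I = {}"
  shows "card I * grundy_dom_num VH EH < grundy_dom_num (lex_vertices VG VH) (lex_edges EG VH EH)"
proof -
  let ?P = "legal_seq (lex_vertices VG VH) (lex_edges EG VH EH)"
  let ?N = "closed_nbhd (lex_vertices VG VH) (lex_edges EG VH EH)"
  define B where "B = {b \<in> I. EG w b}"
  have sym: "EG x y \<Longrightarrow> EG y x" and adj: "EG x y \<Longrightarrow> x \<in> VG \<and> y \<in> VG" for x y
    using G by (auto simp: fin_graph_def)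
  have "finite I"
    using G I by (auto simp: fin_graph_def indep_set_def intro: finite_subset)
  then have "finite B"
    by (simp add: B_def)
  obtain as where as: "set as = I - B" "distinct as"
    using finite_distinct_list[of "I - B"] \<open>finite I\<close> by blast
  obtain bs where bs: "set bs = B" "distinct bs"
    using finite_distinct_list[OF \<open>finite B\<close>] by blast
  obtain hs where hs: "legal_seq VH EH hs" "length hs = grundy_dom_num VH EH"
    using grundy_dom_num_attained[of VH EH] H
    by (auto simp: fin_graph_def grundy_dom_seq_iff_legal_seq)
  obtain h where h: "h \<in> VH"
    using H(2) by blast
  have "?P ([] @ List.product as hs)"
    using as I by (intro legal_seq_lex_append_product[OF G hs(1) legal_seq_Nil]) (auto simp: indep_set_def)
  moreover have "(w, h) \<in> ?N (v, h) - (\<Union>u\<in>set (List.product as hs). ?N u)"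
  proof -
    have "(w, h) \<in> ?N (v, h)"
      using closed_nbhd_lex[OF G _ h] vw h adj by simp
    moreover have "(w, h) \<notin> ?N (a, h')" if "a \<in> I - B" "h' \<in> VH" for a h'
    proof -
      have "a \<in> VG"
        using that I by (auto simp: indep_set_def)
      then show ?thesis
        using closed_nbhd_lex[OF G _ that(2), of a "(w, h)" EH] that vw sym by (auto simp: B_def)
    qed
    moreover have "set hs \<subseteq> VH"
      using hs(1) by (simp add: legal_seq_def)
    ultimately show ?thesis
      using as(1) by auto
  qed
  ultimately have "?P (List.product as hs @ [(v, h)])"
    unfolding legal_seq_snoc_iff using as(1) vw h by (auto simp: lex_vertices_def)
  moreover have "\<forall>b\<in>set bs. \<forall>x\<in>set (List.product as hs @ [(v, h)]). fst x \<noteq> b \<and> \<not> EG (fst x) b"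
  proof -
    have "\<not> EG v b" if "b \<in> B" for b
      using no_common that adj by (auto simp: B_def open_nbhd_def)
    then show ?thesis
      using as(1) bs(1) vw I by (auto simp: B_def indep_set_def)
  qed
  moreover have "indep_set VG EG (set bs)"
    using I bs(1) by (auto simp: B_def indep_set_def)
  ultimately have "?P ((List.product as hs @ [(v, h)]) @ List.product bs hs)"
    using bs(2) by (intro legal_seq_lex_append_product[OF G hs(1)])
  from legal_seq_length_le_grundy_dom_num[OF finite_lex_vertices[OF G H(1)] this]
  have "card (I - B) * length hs + 1 + card B * length hs
      \<le> grundy_dom_num (lex_vertices VG VH) (lex_edges EG VH EH)"
    using distinct_card[OF as(2)] distinct_card[OF bs(2)] as(1) bs(1) by simp
  moreover have "card I = card (I - B) + card B"
    using \<open>finite I\<close> card_Diff_subset[OF \<open>finite B\<close>] card_mono[OF \<open>finite I\<close>]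
    by (simp add: B_def)
  ultimately show ?thesis
    using hs(2) by (simp add: add_mult_distrib)
qed

locale lex_legal_seq =
  fixes VG :: "'a set" and EG :: "'a \<Rightarrow> 'a \<Rightarrow> bool"
    and VH :: "'b set" and EH :: "'b \<Rightarrow> 'b \<Rightarrow> bool"
    and S :: "('a \<times> 'b) list"
  assumes graph_G: "fin_graph VG EG" and graph_H: "fin_graph VH EH"
    and legal: "legal_seq (lex_vertices VG VH) (lex_edges EG VH EH) S"
begin

abbreviation N :: "'a \<times> 'b \<Rightarrow> ('a \<times> 'b) set" where
  "N \<equiv> closed_nbhd (lex_vertices VG VH) (lex_edges EG VH EH)"

abbreviation \<gamma>H :: nat where
  "\<gamma>H \<equiv> grundy_dom_num VH EH"

definition footprint :: "nat \<Rightarrow> ('a \<times> 'b) set" where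
  "footprint j = N (S ! j) - (\<Union>j'<j. N (S ! j'))"

definition steps_at :: "'a set \<Rightarrow> nat set" where
  "steps_at X = {j. j < length S \<and> fst (S ! j) \<in> X}"

lemma adj_sym: "EG x y \<Longrightarrow> EG y x"
  and adj_irrefl: "\<not> EG x x"
  and adj_mem: "EG x y \<Longrightarrow> x \<in> VG \<and> y \<in> VG"
  using graph_G by (auto simp: fin_graph_def)

lemma step_mem: "j < length S \<Longrightarrow> S ! j \<in> VG \<times> VH"
  using legal nth_mem[of j S] unfolding legal_seq_def lex_vertices_def by blast

lemma mem_closed_nbhd_step:
  assumes "j < length S"
  shows "u \<in> N (S ! j) \<longleftrightarrow> u \<in> VG \<times> VH \<and>
    (EG (fst (S ! j)) (fst u) \<or> fst u = fst (S ! j) \<and> snd u \<in> closed_nbhd VH EH (snd (S ! j)))"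
  using closed_nbhd_lex[OF graph_G, of "fst (S ! j)" "snd (S ! j)" VH u EH] step_mem[OF assms]
  by auto

lemma footprint_nonempty: "j < length S \<Longrightarrow> footprint j \<noteq> {}"
  using legal unfolding legal_seq_def footprint_def by blast

lemma footprint_not_earlier: "u \<in> footprint j \<Longrightarrow> j' < j \<Longrightarrow> u \<notin> N (S ! j')"
  unfolding footprint_def by blast

lemma footprint_mem:
  assumes "u \<in> footprint j" "j < length S"
  shows "u \<in> VG \<times> VH"
    and "fst u = fst (S ! j) \<or> EG (fst (S ! j)) (fst u)"
  using assms mem_closed_nbhd_step[of j u] unfolding footprint_def by auto

lemma footprint_not_adj_earlier:
  assumes "u \<in> footprint j" "j < length S" "j' < j"
  shows "\<not> EG (fst (S ! j')) (fst u)"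
  using assms footprint_not_earlier[OF assms(1,3)] footprint_mem(1)[OF assms(1,2)]
    mem_closed_nbhd_step[of j' u] by auto

lemma steps_at_finite: "finite (steps_at X)"
  by (simp add: steps_at_def)

lemma card_steps_at_eq_sum:
  "finite X \<Longrightarrow> card (steps_at X) = (\<Sum>g\<in>X. card (steps_at {g}))"
  unfolding steps_at_def
  by (subst card_UN_disjoint[symmetric]) (auto intro: arg_cong[where f = card])

lemma steps_at_footprints:
  "\<forall>j\<in>steps_at {g}. \<exists>w\<in>closed_nbhd VH EH (snd (S ! j)).
     \<forall>j'\<in>steps_at {g}. j' < j \<longrightarrow> w \<notin> closed_nbhd VH EH (snd (S ! j'))"
proof
  fix j assume j: "j \<in> steps_at {g}"
  then have jl: "j < length S" and jg: "fst (S ! j) = g"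
    by (auto simp: steps_at_def)
  obtain u where u: "u \<in> footprint j"
    using footprint_nonempty[OF jl] by blast
  show "\<exists>w\<in>closed_nbhd VH EH (snd (S ! j)).
      \<forall>j'\<in>steps_at {g}. j' < j \<longrightarrow> w \<notin> closed_nbhd VH EH (snd (S ! j'))"
  proof (cases "EG g (fst u)")
    case True
    then have "\<forall>j'\<in>steps_at {g}. \<not> j' < j"
      using footprint_not_adj_earlier[OF u jl] by (auto simp: steps_at_def)
    then show ?thesis
      using self_in_closed_nbhd[of "snd (S ! j)" VH EH] by blast
  next
    case False
    then have "fst u = g" "snd u \<in> closed_nbhd VH EH (snd (S ! j))"
      using u jl jg mem_closed_nbhd_step[of j u] by (auto simp: footprint_def)
    moreover have "snd u \<notin> closed_nbhd VH EH (snd (S ! j'))"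
      if "j' \<in> steps_at {g}" "j' < j" for j'
      using that footprint_not_earlier[OF u] footprint_mem(1)[OF u jl] \<open>fst u = g\<close>
        mem_closed_nbhd_step[of j' u] by (auto simp: steps_at_def)
    ultimately show ?thesis by blast
  qed
qed

lemma inj_on_snd_steps_at: "inj_on (\<lambda>j. snd (S ! j)) (steps_at {g})"
proof (rule inj_onI)
  fix j j' assume "j \<in> steps_at {g}" "j' \<in> steps_at {g}" "snd (S ! j) = snd (S ! j')"
  then have "j < length S" "j' < length S" "S ! j = S ! j'"
    by (auto simp: steps_at_def prod_eq_iff)
  then show "j = j'"
    using legal by (simp add: legal_seq_def nth_eq_iff_index_eq)
qed

lemma snd_steps_at_subset: "(\<lambda>j. snd (S ! j)) ` steps_at {g} \<subseteq> VH"
  using step_mem by (auto simp: steps_at_def mem_Times_iff)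

lemma card_steps_at_le: "card (steps_at {g}) \<le> \<gamma>H"
  using graph_H
  by (intro card_le_grundy_dom_num_if_footprints[OF _ steps_at_finite inj_on_snd_steps_at
        snd_steps_at_subset steps_at_footprints]) (simp add: fin_graph_def)

lemma card_steps_at_less:
  assumes before: "\<forall>j\<in>steps_at {g}. j < t" and "w \<in> VH"
    and undominated: "\<forall>j'<t. (g, w) \<notin> N (S ! j')"
  shows "card (steps_at {g}) < \<gamma>H"
proof -
  have "w \<notin> closed_nbhd VH EH (snd (S ! j))" if "j \<in> steps_at {g}" for j
  proof
    assume "w \<in> closed_nbhd VH EH (snd (S ! j))"
    moreover have "j < length S" "fst (S ! j) = g" "j < t"
      using that before by (auto simp: steps_at_def)
    ultimately have "(g, w) \<in> N (S ! j)"
      using step_mem[of j] \<open>w \<in> VH\<close> mem_closed_nbhd_step[of j "(g, w)"] by (auto simp: mem_Times_iff)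
    then show False
      using undominated \<open>j < t\<close> by blast
  qed
  then show ?thesis
    using graph_H \<open>w \<in> VH\<close>
    by (intro card_less_grundy_dom_num_if_footprints[OF _ steps_at_finite inj_on_snd_steps_at
          snd_steps_at_subset steps_at_footprints, of w]) (simp_all add: fin_graph_def)
qed

lemma \<gamma>H_pos: "S \<noteq> [] \<Longrightarrow> 0 < \<gamma>H"
  using graph_H step_mem[of 0] legal_seq_singleton[of "snd (S ! 0)" VH EH]
    legal_seq_length_le_grundy_dom_num[of VH EH "[snd (S ! 0)]"]
  by (auto simp: fin_graph_def mem_Times_iff)

end

locale split_lex_legal_seq = lex_legal_seq +
  fixes I K :: "'a set"
  assumes partition: "VG = I \<union> K" and disjoint: "I \<inter> K = {}"
    and clique: "clique VG EG K" and indep: "indep_set VG EG I"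
    and K_adj_I: "\<forall>k\<in>K. \<exists>i\<in>I. EG k i"
begin

lemma indep_not_adj: "i \<in> I \<Longrightarrow> i' \<in> I \<Longrightarrow> \<not> EG i i'"
  using indep by (simp add: indep_set_def)

lemma clique_adj: "k \<in> K \<Longrightarrow> k' \<in> K \<Longrightarrow> k \<noteq> k' \<Longrightarrow> EG k k'"
  using clique by (simp add: clique_def)

lemma finite_I: "finite I"
  using graph_G partition by (simp add: fin_graph_def)

definition deficit :: "'a \<Rightarrow> nat" where
  "deficit i = \<gamma>H - card (steps_at {i})"

definition charged :: "nat set" where
  "charged = {j \<in> steps_at K. \<exists>u\<in>footprint j. fst u \<in> I}"

definition charge :: "nat \<Rightarrow> 'a" where
  "charge j = (SOME i. i \<in> I \<and> (\<exists>u\<in>footprint j. fst u = i))"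

lemma charged_steps_at: "j \<in> charged \<Longrightarrow> j < length S \<and> fst (S ! j) \<in> K"
  by (simp add: charged_def steps_at_def)

lemma charge_footprint: "j \<in> charged \<Longrightarrow> charge j \<in> I \<and> (\<exists>u\<in>footprint j. fst u = charge j)"
  unfolding charge_def charged_def by (rule someI_ex) blast

lemma charge_adj:
  assumes "j \<in> charged"
  shows "EG (fst (S ! j)) (charge j)"
proof -
  obtain u where u: "u \<in> footprint j" "fst u = charge j" and "charge j \<in> I"
    using charge_footprint[OF assms] by blast
  moreover have "fst (S ! j) \<notin> I" "j < length S"
    using charged_steps_at[OF assms] disjoint by auto
  ultimately show ?thesis
    using footprint_mem(2)[OF u(1)] by auto
qed

lemma inj_on_charge: "inj_on charge charged"
proof -
  have "charge j \<noteq> charge j'" if jj': "j \<in> charged" "j' \<in> charged" "j < j'" for j j'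
  proof
    assume "charge j = charge j'"
    moreover obtain u where "u \<in> footprint j'" "fst u = charge j'"
      using charge_footprint[OF jj'(2)] by blast
    moreover have "j' < length S"
      using charged_steps_at[OF jj'(2)] by simp
    ultimately show False
      using footprint_not_adj_earlier[of u j' j] charge_adj[OF jj'(1)] jj'(3) by simp
  qed
  then show ?thesis
    by (intro inj_onI) (metis linorder_neqE_nat)
qed

lemma deficit_charge_pos:
  assumes "j \<in> charged" and no_later: "\<forall>j'\<in>steps_at {charge j}. \<not> j < j'"
  shows "0 < deficit (charge j)"
proof -
  obtain u where u: "u \<in> footprint j" "fst u = charge j" and "charge j \<in> I"
    using charge_footprint[OF assms(1)] by blast
  have j: "j < length S" "fst (S ! j) \<in> K"
    using charged_steps_at[OF assms(1)] by auto
  have u_eq: "(charge j, snd u) = u"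
    using u(2) by (simp add: prod_eq_iff)
  have "\<forall>j'\<in>steps_at {charge j}. j' < j"
  proof
    fix j' assume j': "j' \<in> steps_at {charge j}"
    then have "j' \<noteq> j"
      using j(2) \<open>charge j \<in> I\<close> disjoint by (auto simp: steps_at_def)
    then show "j' < j"
      using no_later j' by auto
  qed
  moreover have "snd u \<in> VH"
    using footprint_mem(1)[OF u(1) j(1)] by auto
  moreover have "\<forall>j'<j. (charge j, snd u) \<notin> N (S ! j')"
    using footprint_not_earlier[OF u(1)] u_eq by simp
  ultimately have "card (steps_at {charge j}) < \<gamma>H"
    by (rule card_steps_at_less)
  then show ?thesis
    by (simp add: deficit_def)
qed

lemma card_le_sum_deficit_charge:
  assumes "X \<subseteq> charged" and "\<forall>j\<in>X. \<forall>j'\<in>steps_at {charge j}. \<not> j < j'"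
  shows "card X \<le> (\<Sum>i\<in>charge ` X. deficit i)"
proof -
  have "card X = card (charge ` X)"
    using inj_on_subset[OF inj_on_charge assms(1)] by (simp add: card_image)
  also have "\<dots> = (\<Sum>i\<in>charge ` X. 1)"
    by simp
  also have "\<dots> \<le> (\<Sum>i\<in>charge ` X. deficit i)"
  proof (rule sum_mono)
    fix i assume "i \<in> charge ` X"
    then show "1 \<le> deficit i"
      using deficit_charge_pos assms by (force simp: Suc_le_eq)
  qed
  finally show ?thesis .
qed

text \<open>Once the step \<open>j\<close> has dominated the whole fiber of its charge \<open>i\<close>, a later step in
  that fiber can only footprint in the fiber of a clique neighbour of \<open>i\<close>, and all of these
  except the fiber of \<open>fst (S ! j)\<close> are dominated by \<open>j\<close> as well.\<close>
lemma footprint_after_charge: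
  assumes "j \<in> charged" "j' \<in> steps_at {charge j}" "j < j'" "u \<in> footprint j'"
  shows "fst u = fst (S ! j)"
proof -
  have j: "j < length S" "fst (S ! j) \<in> K"
    using charged_steps_at[OF assms(1)] by auto
  have j': "j' < length S" "fst (S ! j') = charge j"
    using assms(2) by (auto simp: steps_at_def)
  have not_adj: "\<not> EG (fst (S ! j)) (fst u)"
    using footprint_not_adj_earlier[OF assms(4) j'(1) assms(3)] .
  then have "fst u \<noteq> charge j"
    using charge_adj[OF assms(1)] by auto
  then have adj: "EG (charge j) (fst u)"
    using footprint_mem(2)[OF assms(4) j'(1)] j'(2) by auto
  have "charge j \<in> I"
    using charge_footprint[OF assms(1)] by blast
  then have "fst u \<notin> I"
    using indep_not_adj adj by blast
  then have "fst u \<in> K"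
    using adj_mem[OF adj] partition by blast
  then show ?thesis
    using not_adj clique_adj[OF j(2)] by metis
qed

lemma sum_card_steps_at_add_sum_deficit:
  "(\<Sum>i\<in>I. card (steps_at {i})) + (\<Sum>i\<in>I. deficit i) = card I * \<gamma>H"
  using card_steps_at_le by (simp add: deficit_def flip: sum.distrib)

lemma length_eq_card_steps_at: "length S = card (steps_at I) + card (steps_at K)"
proof -
  have "steps_at I \<union> steps_at K = {..<length S}"
    using step_mem partition by (auto simp: steps_at_def mem_Times_iff)
  moreover have "steps_at I \<inter> steps_at K = {}"
    using disjoint by (auto simp: steps_at_def)
  ultimately show ?thesis
    by (metis card_Un_disjoint card_lessThan steps_at_finite)
qed

end

locale first_clique_step = split_lex_legal_seq +
  fixes y :: nat
  assumes first_in: "y \<in> steps_at K" and first_le: "\<And>j. j \<in> steps_at K \<Longrightarrow> y \<le> j"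
begin

abbreviation k\<^sub>1 :: 'a where
  "k\<^sub>1 \<equiv> fst (S ! y)"

definition A :: "'a set" where
  "A = {a \<in> I. EG k\<^sub>1 a}"

definition later_charged :: "nat set" where
  "later_charged = {j \<in> charged. y < j}"

definition later_uncharged :: "nat set" where
  "later_uncharged = {j \<in> steps_at K. y < j \<and> j \<notin> charged}"

lemma first: "y < length S" "k\<^sub>1 \<in> K"
  using first_in by (auto simp: steps_at_def)

lemma finite_A: "finite A"
  using finite_I by (simp add: A_def)

lemma deficit_le_sum_A: "a \<in> A \<Longrightarrow> deficit a \<le> (\<Sum>a\<in>A. deficit a)"
  using finite_A by (intro member_le_sum) auto

text \<open>After step \<open>y\<close> every fiber over a neighbour of \<open>k\<^sub>1\<close> is dominated; these are all
  fibers over \<open>K - {k\<^sub>1}\<close> and over \<open>A\<close>.\<close>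
lemma footprint_after_first:
  assumes "y < j" "j < length S" "u \<in> footprint j"
  shows "fst u \<in> I - A \<or> fst u = k\<^sub>1"
proof -
  have not_adj: "\<not> EG k\<^sub>1 (fst u)"
    using footprint_not_adj_earlier[OF assms(3,2,1)] .
  have "fst u \<in> I \<union> K"
    using footprint_mem(1)[OF assms(3,2)] partition by auto
  then show ?thesis
    using not_adj clique_adj[OF first(2)] by (auto simp: A_def)
qed

lemma charge_later_charged_notin_A:
  assumes "j \<in> later_charged"
  shows "charge j \<notin> A"
proof -
  have j: "j \<in> charged" "y < j"
    using assms by (auto simp: later_charged_def)
  obtain u where u: "u \<in> footprint j" "fst u = charge j" and "charge j \<in> I"
    using charge_footprint[OF j(1)] by blast
  then show ?thesis
    using footprint_after_first[OF j(2) _ u(1)] charged_steps_at[OF j(1)] first(2) disjoint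
    by auto
qed

lemma later_charged_not_first_fiber:
  assumes "j \<in> later_charged"
  shows "fst (S ! j) \<noteq> k\<^sub>1"
proof
  assume "fst (S ! j) = k\<^sub>1"
  moreover have "j \<in> charged"
    using assms by (simp add: later_charged_def)
  ultimately have "charge j \<in> A"
    using charge_adj[of j] charge_footprint[of j] by (simp add: A_def)
  then show False
    using charge_later_charged_notin_A[OF assms] by contradiction
qed

lemma later_charged_no_later_step:
  assumes "j \<in> later_charged"
  shows "\<forall>j'\<in>steps_at {charge j}. \<not> j < j'"
proof (intro ballI notI)
  fix j' assume j': "j' \<in> steps_at {charge j}" "j < j'"
  have j: "j \<in> charged" "y < j"
    using assms by (auto simp: later_charged_def)
  have "j' < length S"
    using j' by (simp add: steps_at_def)
  then obtain u where u: "u \<in> footprint j'"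
    using footprint_nonempty by blast
  then have "fst u = fst (S ! j)"
    using footprint_after_charge[OF j(1) j'] by simp
  moreover have "fst u \<in> I - A \<or> fst u = k\<^sub>1"
    using footprint_after_first[OF _ \<open>j' < length S\<close> u] j(2) j'(2) by simp
  ultimately show False
    using charged_steps_at[OF j(1)] later_charged_not_first_fiber[OF assms] disjoint by auto
qed

lemma card_later_charged: "card later_charged \<le> (\<Sum>i\<in>charge ` later_charged. deficit i)"
  using later_charged_no_later_step
  by (intro card_le_sum_deficit_charge) (auto simp: later_charged_def)

lemma footprint_later_uncharged:
  assumes "j \<in> later_uncharged" "u \<in> footprint j"
  shows "fst u = k\<^sub>1"
proof -
  have "j \<in> steps_at K" "y < j" "j \<notin> charged"
    using assms(1) by (auto simp: later_uncharged_def)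
  then show ?thesis
    using footprint_after_first[of j u] assms(2) by (auto simp: charged_def steps_at_def)
qed

lemma later_uncharged_not_adj_earlier:
  assumes "j \<in> later_uncharged" "j' < j"
  shows "\<not> EG (fst (S ! j')) k\<^sub>1"
proof -
  have "j < length S"
    using assms(1) by (simp add: later_uncharged_def steps_at_def)
  then obtain u where "u \<in> footprint j"
    using footprint_nonempty by blast
  then show ?thesis
    using footprint_not_adj_earlier[OF _ \<open>j < length S\<close> assms(2)]
      footprint_later_uncharged[OF assms(1)] by metis
qed

lemma steps_at_K_subset: "steps_at K \<subseteq> insert y (later_charged \<union> later_uncharged)"
  using first_le by (auto simp: later_charged_def later_uncharged_def charged_def nat_less_le)

lemma footprint_after_first_if_early_adj:
  assumes "j\<^sub>0 < y" "EG (fst (S ! j\<^sub>0)) k\<^sub>1" "y < j" "j < length S" "u \<in> footprint j"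
  shows "fst u \<in> I - A"
  using footprint_after_first[OF assms(3-5)] footprint_not_adj_earlier[OF assms(5,4), of j\<^sub>0]
    assms(1-3) by auto

lemma later_uncharged_empty_if_early_adj:
  assumes "j\<^sub>0 < y" "EG (fst (S ! j\<^sub>0)) k\<^sub>1"
  shows "later_uncharged = {}"
  using later_uncharged_not_adj_earlier assms by (force simp: later_uncharged_def)

lemma deficit_charge_first_pos_if_early_adj:
  assumes early: "j\<^sub>0 < y" "EG (fst (S ! j\<^sub>0)) k\<^sub>1" and "y \<in> charged"
  shows "charge y \<in> A" and "0 < deficit (charge y)"
proof -
  show "charge y \<in> A"
    using charge_adj[OF assms(3)] charge_footprint[OF assms(3)] by (simp add: A_def)
  have "\<not> y < j'" if j': "j' \<in> steps_at {charge y}" for j'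
  proof
    assume "y < j'"
    have "j' < length S"
      using j' by (simp add: steps_at_def)
    then obtain u where u: "u \<in> footprint j'"
      using footprint_nonempty by blast
    have "fst u \<in> I - A"
      using footprint_after_first_if_early_adj[OF early \<open>y < j'\<close> \<open>j' < length S\<close> u] .
    moreover have "fst u = k\<^sub>1"
      using footprint_after_charge[OF assms(3) j' \<open>y < j'\<close> u] .
    ultimately show False
      using first(2) disjoint by auto
  qed
  then show "0 < deficit (charge y)"
    using deficit_charge_pos[OF assms(3)] by blast
qed

text \<open>The vertex \<open>b\<close> is shielded from every step: before \<open>y\<close> by the footprint of \<open>y\<close>,
  and after \<open>y\<close> because all footprints then lie over \<open>I - A\<close>.\<close>
lemma steps_at_empty_if_early_adj:
  assumes early: "j\<^sub>0 < y" "EG (fst (S ! j\<^sub>0)) k\<^sub>1"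
    and u: "u \<in> footprint y" and b: "b \<in> A" "EG (fst u) b"
  shows "steps_at {b} = {}"
proof (rule ccontr)
  assume "steps_at {b} \<noteq> {}"
  then obtain j where j: "j < length S" "fst (S ! j) = b"
    by (auto simp: steps_at_def)
  have "b \<in> I"
    using b(1) by (simp add: A_def)
  then have "j \<noteq> y"
    using j(2) first(2) disjoint by auto
  then consider "j < y" | "y < j"
    by linarith
  then show False
  proof cases
    case 1
    then show False
      using footprint_not_adj_earlier[OF u first(1) 1] b(2) adj_sym j(2) by auto
  next
    case 2
    obtain u' where u': "u' \<in> footprint j"
      using footprint_nonempty j(1) by blast
    then have "fst u' \<in> I - A"
      using footprint_after_first_if_early_adj[OF early 2 j(1)] by blast
    moreover have "fst u' = b \<or> EG b (fst u')"
      using footprint_mem(2)[OF u' j(1)] j(2) by auto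
    ultimately show False
      using b(1) \<open>b \<in> I\<close> indep_not_adj by auto
  qed
qed

lemma one_le_deficit_A_split_n_if_early_adj:
  assumes early: "j\<^sub>0 < y" "EG (fst (S ! j\<^sub>0)) k\<^sub>1"
  shows "1 \<le> (\<Sum>a\<in>A. deficit a) + split_n VG EG I K"
proof (cases "y \<in> charged")
  case True
  then show ?thesis
    using deficit_charge_first_pos_if_early_adj[OF early True] deficit_le_sum_A by fastforce
next
  case False
  obtain u where u: "u \<in> footprint y"
    using footprint_nonempty first(1) by blast
  have "fst u \<notin> I"
    using False first_in u by (auto simp: charged_def)
  then have "fst u \<in> K"
    using footprint_mem(1)[OF u first(1)] partition by auto
  show ?thesis
  proof (cases "\<exists>b\<in>A. EG (fst u) b")
    case True
    then obtain b where b: "b \<in> A" "EG (fst u) b"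
      by blast
    then have "deficit b = \<gamma>H"
      using steps_at_empty_if_early_adj[OF early u b] by (simp add: deficit_def)
    moreover have "0 < \<gamma>H"
      using \<gamma>H_pos first(1) by (cases S) auto
    ultimately show ?thesis
      using deficit_le_sum_A[OF b(1)] by linarith
  next
    case False
    then have "open_nbhd VG EG (fst u) \<inter> open_nbhd VG EG k\<^sub>1 \<inter> I = {}"
      using adj_sym by (auto simp: A_def open_nbhd_def)
    then have "split_n VG EG I K = 1"
      using \<open>fst u \<in> K\<close> first(2) by (auto simp: split_n_def)
    then show ?thesis
      by simp
  qed
qed

lemma card_steps_at_first: "Suc (card (steps_at {k\<^sub>1} - {y})) = card (steps_at {k\<^sub>1})"
  using first(1) by (intro card_Suc_Diff1 steps_at_finite) (simp add: steps_at_def)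

lemma ex_deficit_ge_if_never_adj:
  assumes never: "\<forall>j<length S. \<not> EG (fst (S ! j)) k\<^sub>1"
  shows "\<exists>a\<in>A. Suc (card later_uncharged) \<le> deficit a"
proof -
  obtain a where a: "a \<in> I" "EG k\<^sub>1 a"
    using K_adj_I first(2) by blast
  have "later_uncharged \<subseteq> steps_at {k\<^sub>1} - {y}"
    using never clique_adj[OF _ first(2)]
    by (auto simp: later_uncharged_def steps_at_def)
  then have "card later_uncharged \<le> card (steps_at {k\<^sub>1} - {y})"
    by (intro card_mono) (simp_all add: steps_at_finite)
  moreover have "steps_at {a} = {}"
    using a never adj_sym by (auto simp: steps_at_def)
  ultimately have "Suc (card later_uncharged) \<le> deficit a"
    using card_steps_at_first card_steps_at_le[of k\<^sub>1] by (simp add: deficit_def)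
  then show ?thesis
    using a by (auto simp: A_def)
qed

end

locale first_adj_step = first_clique_step +
  fixes z :: nat
  assumes z_less: "z < length S" and z_adj: "EG (fst (S ! z)) k\<^sub>1"
    and z_first: "\<And>j. j < z \<Longrightarrow> \<not> EG (fst (S ! j)) k\<^sub>1" and y_less_z: "y < z"
begin

lemma footprint_after_z:
  assumes "z < j" "j < length S" "u \<in> footprint j"
  shows "fst u \<in> I - A"
  using footprint_after_first[OF _ assms(2,3)] footprint_not_adj_earlier[OF assms(3,2,1)]
    z_adj y_less_z assms(1) by auto

lemma steps_at_first_before_z:
  assumes "j \<in> steps_at {k\<^sub>1}"
  shows "j < z"
proof -
  have j: "j < length S" "fst (S ! j) = k\<^sub>1"
    using assms by (auto simp: steps_at_def)
  have "j \<noteq> z"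
    using j(2) z_adj adj_irrefl by auto
  moreover have "\<not> z < j"
  proof
    assume "z < j"
    obtain u where u: "u \<in> footprint j"
      using footprint_nonempty j(1) by blast
    then have "fst u \<in> I - A"
      using footprint_after_z[OF \<open>z < j\<close> j(1)] by blast
    moreover have "fst u = k\<^sub>1 \<or> EG k\<^sub>1 (fst u)"
      using footprint_mem(2)[OF u j(1)] j(2) by auto
    ultimately show False
      using first(2) disjoint by (auto simp: A_def)
  qed
  ultimately show ?thesis
    by simp
qed

lemma steps_at_A_subset:
  assumes "a \<in> A"
  shows "steps_at {a} \<subseteq> {z}"
proof
  fix j assume "j \<in> steps_at {a}"
  then have j: "j < length S" "fst (S ! j) = a"
    by (auto simp: steps_at_def)
  have a: "a \<in> I" "EG a k\<^sub>1"
    using assms adj_sym by (auto simp: A_def)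
  have "\<not> j < z"
    using z_first j(2) a(2) by auto
  moreover have "\<not> z < j"
  proof
    assume "z < j"
    obtain u where u: "u \<in> footprint j"
      using footprint_nonempty j(1) by blast
    then have "fst u \<in> I - A"
      using footprint_after_z[OF \<open>z < j\<close> j(1)] by blast
    moreover have "fst u = a \<or> EG a (fst u)"
      using footprint_mem(2)[OF u j(1)] j(2) by auto
    ultimately show False
      using assms a(1) indep_not_adj by auto
  qed
  ultimately show "j \<in> {z}"
    by simp
qed

lemma later_uncharged_subset: "later_uncharged \<subseteq> insert z (steps_at {k\<^sub>1} - {y})"
proof
  fix j assume j: "j \<in> later_uncharged"
  then have "j < length S" "fst (S ! j) \<in> K" "y < j"
    by (auto simp: later_uncharged_def steps_at_def)
  show "j \<in> insert z (steps_at {k\<^sub>1} - {y})"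
  proof (cases "fst (S ! j) = k\<^sub>1")
    case True
    then show ?thesis
      using \<open>j < length S\<close> \<open>y < j\<close> by (simp add: steps_at_def)
  next
    case False
    then have "EG (fst (S ! j)) k\<^sub>1"
      using clique_adj[OF \<open>fst (S ! j) \<in> K\<close> first(2)] by simp
    then have "\<not> j < z"
      using z_first by blast
    moreover have "\<not> z < j"
      using later_uncharged_not_adj_earlier[OF j] z_adj by blast
    ultimately show ?thesis
      by simp
  qed
qed

text \<open>If the footprint of \<open>z\<close> lies over \<open>k\<^sub>1\<close>, then the \<open>k\<^sub>1\<close>-fiber, which receives no
  steps after \<open>z\<close>, still had an undominated vertex just before \<open>z\<close>.\<close>
lemma card_steps_at_first_less:
  assumes "z \<in> later_uncharged \<or> fst (S ! z) \<in> A"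
  shows "card (steps_at {k\<^sub>1}) < \<gamma>H"
proof -
  obtain u where u: "u \<in> footprint z"
    using footprint_nonempty z_less by blast
  have "fst u = k\<^sub>1"
    using assms
  proof
    assume "z \<in> later_uncharged"
    then show ?thesis
      using footprint_later_uncharged u by blast
  next
    assume zA: "fst (S ! z) \<in> A"
    have "fst u = fst (S ! z) \<or> EG (fst (S ! z)) (fst u)"
      using footprint_mem(2)[OF u z_less] .
    then have "fst u \<notin> I - A"
      using zA indep_not_adj by (auto simp: A_def)
    then show ?thesis
      using footprint_after_first[OF y_less_z z_less u] by blast
  qed
  then have "(k\<^sub>1, snd u) = u"
    by (simp add: prod_eq_iff)
  then have "\<forall>j'<z. (k\<^sub>1, snd u) \<notin> N (S ! j')"
    using footprint_not_earlier[OF u] by simp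
  moreover have "snd u \<in> VH"
    using footprint_mem(1)[OF u z_less] by auto
  ultimately show ?thesis
    using card_steps_at_less steps_at_first_before_z by blast
qed

lemma ex_deficit_ge: "\<exists>a\<in>A. Suc (card later_uncharged) \<le> deficit a"
proof (cases "fst (S ! z) \<in> I")
  case True
  then have zA: "fst (S ! z) \<in> A"
    using z_adj adj_sym by (simp add: A_def)
  have "z \<notin> later_uncharged"
    using True disjoint by (auto simp: later_uncharged_def steps_at_def)
  then have "card later_uncharged \<le> card (steps_at {k\<^sub>1} - {y})"
    using later_uncharged_subset by (intro card_mono) (auto simp: steps_at_finite)
  moreover have "card (steps_at {fst (S ! z)}) \<le> 1"
    using card_mono[OF _ steps_at_A_subset[OF zA]] by simp
  ultimately have "Suc (card later_uncharged) \<le> deficit (fst (S ! z))"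
    using card_steps_at_first card_steps_at_first_less zA by (simp add: deficit_def)
  then show ?thesis
    using zA by blast
next
  case False
  obtain a where a: "a \<in> I" "EG k\<^sub>1 a"
    using K_adj_I first(2) by blast
  then have "a \<in> A"
    by (simp add: A_def)
  then have "steps_at {a} = {}"
    using steps_at_A_subset False a(1) by (auto simp: steps_at_def)
  moreover have "card later_uncharged \<le> card (insert z (steps_at {k\<^sub>1} - {y}))"
    using later_uncharged_subset by (intro card_mono) (auto simp: steps_at_finite)
  moreover have "card (insert z (steps_at {k\<^sub>1} - {y})) \<le> Suc (card (steps_at {k\<^sub>1} - {y}))"
    by (simp add: card_insert_le_m1 card_insert_if steps_at_finite)
  moreover have "z \<in> later_uncharged \<Longrightarrow> card (steps_at {k\<^sub>1}) < \<gamma>H"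
    using card_steps_at_first_less by blast
  moreover have "card later_uncharged \<le> card (steps_at {k\<^sub>1} - {y})" if "z \<notin> later_uncharged"
    using later_uncharged_subset that by (intro card_mono) (auto simp: steps_at_finite)
  ultimately have "Suc (card later_uncharged) \<le> deficit a"
    using card_steps_at_first card_steps_at_le[of k\<^sub>1] by (simp add: deficit_def) linarith
  then show ?thesis
    using \<open>a \<in> A\<close> by blast
qed

end

context first_clique_step
begin

lemma ex_deficit_ge_if_no_early_adj:
  assumes no_early: "\<forall>j<y. \<not> EG (fst (S ! j)) k\<^sub>1"
  shows "\<exists>a\<in>A. Suc (card later_uncharged) \<le> deficit a"
proof (cases "\<exists>j<length S. EG (fst (S ! j)) k\<^sub>1")
  case False
  then show ?thesis
    using ex_deficit_ge_if_never_adj by blast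
next
  case True
  define z where "z = (LEAST j. j < length S \<and> EG (fst (S ! j)) k\<^sub>1)"
  have z: "z < length S" "EG (fst (S ! z)) k\<^sub>1"
    using LeastI_ex[OF True] by (simp_all add: z_def)
  have z_first: "\<not> EG (fst (S ! j)) k\<^sub>1" if "j < z" for j
    using not_less_Least[of j "\<lambda>j. j < length S \<and> EG (fst (S ! j)) k\<^sub>1"] that z(1)
    by (simp add: z_def)
  have "y < z"
    using no_early z(2) adj_irrefl by (metis linorder_neqE_nat)
  interpret first_adj_step VG EG VH EH S I K y z
    using z z_first \<open>y < z\<close> by unfold_locales auto
  show ?thesis
    by (rule ex_deficit_ge)
qed

lemma Suc_card_later_uncharged_le:
  "Suc (card later_uncharged) \<le> (\<Sum>a\<in>A. deficit a) + split_n VG EG I K"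
proof (cases "\<exists>j\<^sub>0<y. EG (fst (S ! j\<^sub>0)) k\<^sub>1")
  case True
  then show ?thesis
    using later_uncharged_empty_if_early_adj one_le_deficit_A_split_n_if_early_adj by auto
next
  case False
  then obtain a where "a \<in> A" "Suc (card later_uncharged) \<le> deficit a"
    using ex_deficit_ge_if_no_early_adj by blast
  then show ?thesis
    using deficit_le_sum_A by fastforce
qed

lemma card_steps_at_K_le: "card (steps_at K) \<le> (\<Sum>i\<in>I. deficit i) + split_n VG EG I K"
proof -
  have fin: "finite later_charged" "finite later_uncharged"
    using steps_at_finite[of K] by (auto simp: later_charged_def later_uncharged_def charged_def
        intro: finite_subset)
  have charges: "charge ` later_charged \<subseteq> I"
    using charge_footprint by (auto simp: later_charged_def)
  have "card (steps_at K) \<le> card (insert y (later_charged \<union> later_uncharged))"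
    using fin steps_at_K_subset by (intro card_mono) auto
  also have "\<dots> \<le> Suc (card (later_charged \<union> later_uncharged))"
    using fin by (simp add: card_insert_if)
  also have "\<dots> \<le> Suc (card later_charged + card later_uncharged)"
    using card_Un_le[of later_charged later_uncharged] by simp
  also have "\<dots> \<le> (\<Sum>i\<in>charge ` later_charged. deficit i) + (\<Sum>a\<in>A. deficit a)
      + split_n VG EG I K"
    using card_later_charged Suc_card_later_uncharged_le by simp
  also have "(\<Sum>i\<in>charge ` later_charged. deficit i) + (\<Sum>a\<in>A. deficit a)
      = (\<Sum>i\<in>charge ` later_charged \<union> A. deficit i)"
    using charge_later_charged_notin_A fin(1) finite_A by (subst sum.union_disjoint) auto
  also have "\<dots> \<le> (\<Sum>i\<in>I. deficit i)"
    using charges finite_I by (intro sum_mono2) (auto simp: A_def)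
  finally show ?thesis
    by simp
qed

end

context split_lex_legal_seq
begin

lemma length_le: "length S \<le> card I * \<gamma>H + split_n VG EG I K"
proof -
  have "card (steps_at K) \<le> (\<Sum>i\<in>I. deficit i) + split_n VG EG I K"
  proof (cases "steps_at K = {}")
    case False
    interpret first_clique_step VG EG VH EH S I K "Min (steps_at K)"
      using False steps_at_finite by unfold_locales auto
    show ?thesis
      by (rule card_steps_at_K_le)
  qed simp
  then show ?thesis
    using length_eq_card_steps_at card_steps_at_eq_sum[OF finite_I]
      sum_card_steps_at_add_sum_deficit by linarith
qed

end

lemma grundy_dom_num_lex_split_le:
  assumes "fin_graph VG EG" "fin_graph VH EH"
    and "VG = I \<union> K" "I \<inter> K = {}" "clique VG EG K" "indep_set VG EG I"
    and "\<forall>k\<in>K. \<exists>i\<in>I. EG k i"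
  shows "grundy_dom_num (lex_vertices VG VH) (lex_edges EG VH EH)
    \<le> card I * grundy_dom_num VH EH + split_n VG EG I K"
proof -
  obtain S where "grundy_dom_seq (lex_vertices VG VH) (lex_edges EG VH EH) S"
    and len: "length S = grundy_dom_num (lex_vertices VG VH) (lex_edges EG VH EH)"
    using grundy_dom_num_attained[OF finite_lex_vertices[OF assms(1,2)]] by blast
  then interpret split_lex_legal_seq VG EG VH EH S I K
    using assms by unfold_locales (simp_all add: grundy_dom_seq_iff_legal_seq)
  show ?thesis
    using length_le len by simp
qed

lemma grundy_dom_num_lex_split_ge:
  assumes G: "fin_graph VG EG" and H: "fin_graph VH EH" "VH \<noteq> {}"
    and split: "VG = I \<union> K" "I \<inter> K = {}" "clique VG EG K" "indep_set VG EG I"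
    and K_adj_I: "\<forall>k\<in>K. \<exists>i\<in>I. EG k i"
  shows "card I * grundy_dom_num VH EH + split_n VG EG I K
    \<le> grundy_dom_num (lex_vertices VG VH) (lex_edges EG VH EH)"
proof (cases "split_n VG EG I K = 0")
  case True
  then show ?thesis
    using grundy_dom_num_lex_ge_indep[OF G H(1) split(4)] by simp
next
  case False
  then obtain v w where vw: "v \<in> K" "w \<in> K"
    and no_common: "open_nbhd VG EG v \<inter> open_nbhd VG EG w \<inter> I = {}"
    by (auto simp: split_n_def split: if_splits)
  have "v \<noteq> w"
    using K_adj_I vw no_common G split(1) by (auto simp: open_nbhd_def fin_graph_def)
  then have "EG v w"
    using split(3) vw by (simp add: clique_def)
  moreover have "v \<in> VG - I" "w \<in> VG - I"
    using vw split(1,2) by auto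
  ultimately have "card I * grundy_dom_num VH EH
      < grundy_dom_num (lex_vertices VG VH) (lex_edges EG VH EH)"
    using grundy_dom_num_lex_gt_indep[OF G H split(4) _ _ _ no_common] by blast
  moreover have "split_n VG EG I K = 1"
    using False by (simp add: split_n_def split: if_splits)
  ultimately show ?thesis
    by simp
qed

theorem corollary3:
  fixes VG :: "'a set" and EG :: "'a \<Rightarrow> 'a \<Rightarrow> bool"
    and VH :: "'b set" and EH :: "'b \<Rightarrow> 'b \<Rightarrow> bool"
    and I K :: "'a set"
  assumes "fin_graph VG EG" and "fin_graph VH EH" and "VH \<noteq> {}"
    and "VG = I \<union> K" and "I \<inter> K = {}"
    and "clique VG EG K" and "indep_set VG EG I"
    and "card I = alpha VG EG"
  shows "grundy_dom_num (lex_vertices VG VH) (lex_edges EG VH EH)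
           = card I * grundy_dom_num VH EH + split_n VG EG I K"
proof -
  have K_adj_I: "\<forall>k\<in>K. \<exists>i\<in>I. EG k i"
    using maximum_indep_set_dominates[OF assms(1,7,8)] assms(4,5) by blast
  show ?thesis
    using grundy_dom_num_lex_split_le[OF assms(1,2,4-7) K_adj_I]
      grundy_dom_num_lex_split_ge[OF assms(1-7) K_adj_I] by simp
qed

end
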